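(* Let $\mathbb{D}=\{z\in\mathbb{C}:|z|<1\}$. For all $z_1,z_2\in\mathbb{D}$, \[ b_{\mathbb{D},2}(z_1,z_2)=\frac{|z_1-z_2|}{\sqrt{2+|z_1|^2+|z_2|^2-2|z_1+z_2|}}. \] In particular, for every $t\in(-1,1)$, $\lim_{r\to1,\ r\in(0,1)}b_{\mathbb{D},2}(r,t)=1$.
   Context: For $z_1,z_2\in\mathbb{D}$, $b_{\mathbb{D},2}(z_1,z_2)=\sup_{z\in\partial\mathbb{D}}\frac{|z_1-z_2|}{\sqrt{|z_1-z|^2+|z-z_2|^2}}$. *)

theory Defs
  imports "HOL-Analysis.Analysis"
begin

definition b_D2 :: "complex \<Rightarrow> complex \<Rightarrow> real" where
  "b_D2 z1 z2 = (SUP z\<in>sphere (0::complex) 1.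
      cmod (z1 - z2) / sqrt ((cmod (z1 - z))\<^sup>2 + (cmod (z - z2))\<^sup>2))"

end

theory Submission
  imports Defs
begin

text \<open>For \<open>|z| = 1\<close> the denominator \<open>|z\<^sub>1 - z|\<^sup>2 + |z - z\<^sub>2|\<^sup>2\<close> equals
  \<open>2 + |z\<^sub>1|\<^sup>2 + |z\<^sub>2|\<^sup>2 - 2 Re ((z\<^sub>1 + z\<^sub>2) conj z)\<close>, which is minimal when \<open>z\<close> points in the
  direction of \<open>z\<^sub>1 + z\<^sub>2\<close>; the supremum is therefore attained there. For real \<open>r \<rightarrow> 1\<close> and
  \<open>t \<in> (-1, 1)\<close> the closed formula is continuous and its value at \<open>r = 1\<close> is
  \<open>(1 - t) / sqrt ((1 - t)\<^sup>2) = 1\<close>.\<close>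

lemma sum_sq_dist_unit_eq:
  fixes z1 z2 z :: complex
  assumes "cmod z = 1"
  shows "(cmod (z1 - z))\<^sup>2 + (cmod (z - z2))\<^sup>2
     = 2 + (cmod z1)\<^sup>2 + (cmod z2)\<^sup>2 - 2 * Re ((z1 + z2) * cnj z)"
proof -
  have "(Re z)\<^sup>2 + (Im z)\<^sup>2 = 1" using assms cmod_power2[of z] by simp
  thus ?thesis unfolding cmod_power2 by (simp add: power2_eq_square algebra_simps)
qed

lemma sum_sq_dist_unit_ge:
  fixes z1 z2 z :: complex
  assumes "cmod z = 1"
  shows "2 + (cmod z1)\<^sup>2 + (cmod z2)\<^sup>2 - 2 * cmod (z1 + z2)
     \<le> (cmod (z1 - z))\<^sup>2 + (cmod (z - z2))\<^sup>2"
proof -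
  have "Re ((z1 + z2) * cnj z) \<le> cmod ((z1 + z2) * cnj z)" by (rule complex_Re_le_cmod)
  also have "\<dots> = cmod (z1 + z2)" using assms by (simp add: norm_mult)
  finally show ?thesis using sum_sq_dist_unit_eq[OF assms, of z1 z2] by linarith
qed

lemma sum_sq_dist_unit_attained:
  fixes z1 z2 :: complex
  obtains z where "cmod z = 1"
    "(cmod (z1 - z))\<^sup>2 + (cmod (z - z2))\<^sup>2 = 2 + (cmod z1)\<^sup>2 + (cmod z2)\<^sup>2 - 2 * cmod (z1 + z2)"
proof (cases "z1 + z2 = 0")
  case True
  then show ?thesis using that[of 1] sum_sq_dist_unit_eq[of 1 z1 z2] by auto
next
  case False
  define z where "z = (z1 + z2) / of_real (cmod (z1 + z2))"
  have unit: "cmod z = 1" using False by (simp add: z_def norm_divide)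
  have "(z1 + z2) * cnj z = ((z1 + z2) * cnj (z1 + z2)) / of_real (cmod (z1 + z2))"
    by (simp add: z_def)
  also have "\<dots> = of_real ((cmod (z1 + z2))\<^sup>2) / of_real (cmod (z1 + z2))"
    by (simp only: complex_norm_square)
  also have "\<dots> = of_real (cmod (z1 + z2))" using False by (simp add: power2_eq_square)
  finally have "Re ((z1 + z2) * cnj z) = cmod (z1 + z2)" by simp
  thus ?thesis using that[OF unit] sum_sq_dist_unit_eq[OF unit, of z1 z2] by simp
qed

lemma sum_sq_dist_unit_min_pos:
  fixes z1 z2 :: complex
  assumes "cmod z1 < 1" "cmod z2 < 1"
  shows "0 < 2 + (cmod z1)\<^sup>2 + (cmod z2)\<^sup>2 - 2 * cmod (z1 + z2)"
proof -
  have "cmod (z1 + z2) \<le> cmod z1 + cmod z2" by (rule norm_triangle_ineq)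
  moreover have "0 < (1 - cmod z1)\<^sup>2 + (1 - cmod z2)\<^sup>2" using assms by (simp add: add_pos_nonneg)
  ultimately show ?thesis by (simp add: power2_eq_square algebra_simps)
qed

lemma b_D2_eq:
  fixes z1 z2 :: complex
  assumes "cmod z1 < 1" "cmod z2 < 1"
  shows "b_D2 z1 z2 = cmod (z1 - z2) /
           sqrt (2 + (cmod z1)\<^sup>2 + (cmod z2)\<^sup>2 - 2 * cmod (z1 + z2))"
proof -
  let ?D = "2 + (cmod z1)\<^sup>2 + (cmod z2)\<^sup>2 - 2 * cmod (z1 + z2)"
  let ?q = "\<lambda>z. cmod (z1 - z2) / sqrt ((cmod (z1 - z))\<^sup>2 + (cmod (z - z2))\<^sup>2)"
  have D_pos: "0 < ?D" using sum_sq_dist_unit_min_pos[OF assms] .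
  obtain z0 where z0: "cmod z0 = 1" "(cmod (z1 - z0))\<^sup>2 + (cmod (z0 - z2))\<^sup>2 = ?D"
    by (rule sum_sq_dist_unit_attained)
  show ?thesis unfolding b_D2_def
  proof (rule cSup_eq_maximum)
    show "cmod (z1 - z2) / sqrt ?D \<in> ?q ` sphere 0 1"
      using z0 by (intro image_eqI[of _ _ z0]) auto
  next
    fix x assume "x \<in> ?q ` sphere 0 1"
    then obtain z where z: "cmod z = 1" and x: "x = ?q z" by auto
    have "sqrt ?D \<le> sqrt ((cmod (z1 - z))\<^sup>2 + (cmod (z - z2))\<^sup>2)"
      using sum_sq_dist_unit_ge[OF z] by (rule real_sqrt_le_mono)
    then show "x \<le> cmod (z1 - z2) / sqrt ?D"
      unfolding x using D_pos by (intro divide_left_mono) auto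
  qed
qed

lemma b_D2_real_tendsto_1:
  fixes t :: real
  assumes "-1 < t" "t < 1"
  shows "((\<lambda>r::real. b_D2 (complex_of_real r) (complex_of_real t)) \<longlongrightarrow> 1)
           (at 1 within {0<..<1})"
proof -
  define f where "f = (\<lambda>r::real. \<bar>r - t\<bar> / sqrt (2 + r\<^sup>2 + t\<^sup>2 - 2 * \<bar>r + t\<bar>))"
  have "\<forall>\<^sub>F r in at 1 within {0<..<1}. f r = b_D2 (complex_of_real r) (complex_of_real t)"
    unfolding eventually_at_filter
  proof (rule always_eventually, intro allI impI)
    fix r :: real assume "r \<noteq> 1" "r \<in> {0<..<1}"
    with assms have "cmod (complex_of_real r) < 1" "cmod (complex_of_real t) < 1" by auto
    from b_D2_eq[OF this] show "f r = b_D2 (complex_of_real r) (complex_of_real t)"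
      unfolding f_def by (simp flip: of_real_add of_real_diff del: of_real_add of_real_diff)
  qed
  moreover have D1: "2 + 1\<^sup>2 + t\<^sup>2 - 2 * \<bar>1 + t\<bar> = (1 - t)\<^sup>2"
    using assms by (simp add: power2_eq_square algebra_simps)
  then have "(f \<longlongrightarrow> f 1) (at 1 within {0<..<1})"
    unfolding f_def using assms by (intro tendsto_intros) auto
  moreover have "f 1 = 1" unfolding f_def D1 using assms by simp
  ultimately show ?thesis by (simp add: tendsto_cong)
qed

theorem theorem3p15:
  shows "(\<forall>z1 \<in> ball (0::complex) 1. \<forall>z2 \<in> ball (0::complex) 1.
            b_D2 z1 z2 = cmod (z1 - z2) /
              sqrt (2 + (cmod z1)\<^sup>2 + (cmod z2)\<^sup>2 - 2 * cmod (z1 + z2)))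
         \<and> (\<forall>t::real. -1 < t \<and> t < 1 \<longrightarrow>
            ((\<lambda>r::real. b_D2 (complex_of_real r) (complex_of_real t)) \<longlongrightarrow> 1)
              (at 1 within {0<..<1}))"
  using b_D2_eq b_D2_real_tendsto_1 by auto

end
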